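(* Let $M$ be a monoid, let $b_0,\dots,b_l,a,h\in M$ with $a$ and $h$ invertible, and suppose that $a^{-s}ha^s$ commutes with every $b_i$ for all $s\in\mathbb{Z}$. For integers $n_1,\dots,n_l$ put $u(t)=b_0t^{n_1}b_1t^{n_2}\cdots t^{n_l}b_l$ and $k=\sum_i n_i$. Then $$u(ah)=\begin{cases}\big(\prod_{j=1}^{k}a^{j}ha^{-j}\big)\,u(a) & \text{if } k>0,\\ \big(\prod_{j=0}^{-1-k}a^{-j}h^{-1}a^{j}\big)\,u(a) & \text{if } k<0,\\ u(a) & \text{if } k=0,\end{cases}$$ where the products are taken in increasing order of $j$. *)

theory Defs
  imports "HOL-Algebra.Group"
begin

definition oprod :: "('a, 'b) monoid_scheme \<Rightarrow> (int \<Rightarrow> 'a) \<Rightarrow> int list \<Rightarrow> 'a" where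
  "oprod G f js = foldr (\<lambda>j acc. f j \<otimes>\<^bsub>G\<^esub> acc) js \<one>\<^bsub>G\<^esub>"

fun word :: "('a, 'b) monoid_scheme \<Rightarrow> (nat \<Rightarrow> 'a) \<Rightarrow> (nat \<Rightarrow> int) \<Rightarrow> nat \<Rightarrow> 'a \<Rightarrow> 'a" where
  "word G b n 0 t = b 0"
| "word G b n (Suc l) t = word G b n l t \<otimes>\<^bsub>G\<^esub> (t [^]\<^bsub>G\<^esub> n (Suc l)) \<otimes>\<^bsub>G\<^esub> b (Suc l)"

end

theory Submission
  imports Defs "HOL-Algebra.Ring"
begin

text \<open>Put Q(z) = (a h)^z a^-z, so that (a h)^z = Q(z) a^z. Q satisfies the cocycle rule
  Q(s + t) = Q(s) (a^s Q(t) a^-s); hence Q(k) is the ordered product of the conjugates a^j h a^-j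
  (k > 0) or a^-j h^-1 a^j (k < 0), and every conjugate a^s Q(t) a^-s commutes with the b_i.
  In u(a h) each factor Q(n_i) can thus be moved to the front past the prefix b_0 a^n_1 ... b_(i-1),
  which conjugates it by a^(n_1 + ... + n_(i-1)), and the cocycle rule collects these conjugates
  into Q(k).\<close>

context monoid begin

lemma int_pow_units_of:
  assumes "x \<in> Units G"
  shows "x [^]\<^bsub>units_of G\<^esub> (z::int) = x [^] z"
proof -
  interpret U: group "units_of G" by (rule units_group)
  have "x [^] (k::nat) \<in> Units G" for k
    using U.nat_pow_closed[of x k] assms by (simp add: units_of_carrier units_of_pow)
  then show ?thesis
    using assms unfolding int_pow_def2[where G = "units_of G"] int_pow_def2[where G = G]
    by (simp add: units_of_pow units_of_inv del: pow_nat)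
qed

lemma Units_int_pow_closed [simp]: "x \<in> Units G \<Longrightarrow> x [^] (z::int) \<in> Units G"
  using group.int_pow_closed[OF units_group, of x z] by (simp add: int_pow_units_of units_of_carrier)

lemma Units_int_pow_1 [simp]: "x \<in> Units G \<Longrightarrow> x [^] (1::int) = x"
  using int_pow_int[of G x 1] by (simp add: Units_closed)

lemma Units_int_pow_mult:
  "x \<in> Units G \<Longrightarrow> x [^] (i + j :: int) = x [^] i \<otimes> x [^] j"
  using group.int_pow_mult[OF units_group, of x i j] by (simp add: int_pow_units_of units_of_carrier units_of_mult)

lemma Units_int_pow_neg:
  "x \<in> Units G \<Longrightarrow> x [^] (- i :: int) = inv (x [^] i)"
  using group.int_pow_neg[OF units_group, of x i]
  by (simp add: int_pow_units_of units_of_carrier units_of_inv)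

lemma Units_inv_mult:
  "x \<in> Units G \<Longrightarrow> y \<in> Units G \<Longrightarrow> inv (x \<otimes> y) = inv y \<otimes> inv x"
  using group.inv_mult_group[OF units_group, of x y]
  by (simp add: units_of_carrier units_of_inv units_of_mult)

lemma Units_int_pow_conj_inv:
  assumes "a \<in> Units G" "h \<in> Units G"
  shows "inv (a [^] (s::int) \<otimes> h \<otimes> a [^] (- s)) = a [^] s \<otimes> inv h \<otimes> a [^] (- s)"
proof -
  have "inv (a [^] (- s)) = a [^] s"
    using Units_int_pow_neg[OF assms(1), of "- s"] by simp
  then show ?thesis
    using assms by (simp add: Units_inv_mult Units_int_pow_neg m_assoc Units_closed)
qed

lemma Units_int_pow_conj_conj:
  assumes "a \<in> Units G" "y \<in> carrier G"
  shows "a [^] (s::int) \<otimes> (a [^] (t::int) \<otimes> y \<otimes> a [^] (- t)) \<otimes> a [^] (- s)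
    = a [^] (s + t) \<otimes> y \<otimes> a [^] (- (s + t))"
proof -
  have "a [^] (- (s + t)) = a [^] (- t) \<otimes> a [^] (- s)"
    using Units_int_pow_mult[OF assms(1), of "- t" "- s"] by (simp add: add.commute)
  then show ?thesis
    using assms by (simp add: Units_int_pow_mult m_assoc Units_closed)
qed

lemma Units_int_pow_mult_conj:
  assumes "a \<in> Units G" "y \<in> carrier G"
  shows "a [^] (t::int) \<otimes> y = (a [^] t \<otimes> y \<otimes> a [^] (- t)) \<otimes> a [^] t"
proof -
  have "a [^] (- t) \<otimes> a [^] t = \<one>"
    using Units_int_pow_mult[OF assms(1), of "- t" t] by simp
  then show ?thesis
    using assms by (simp add: m_assoc Units_closed)
qed

end

definition pow_ratio :: "('a, 'b) monoid_scheme \<Rightarrow> 'a \<Rightarrow> 'a \<Rightarrow> int \<Rightarrow> 'a" where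
  "pow_ratio G a h z = (a \<otimes>\<^bsub>G\<^esub> h) [^]\<^bsub>G\<^esub> z \<otimes>\<^bsub>G\<^esub> a [^]\<^bsub>G\<^esub> (- z)"

context monoid begin

lemma pow_ratio_Units:
  "a \<in> Units G \<Longrightarrow> h \<in> Units G \<Longrightarrow> pow_ratio G a h z \<in> Units G"
  by (simp add: pow_ratio_def)

lemma int_pow_mult_eq_pow_ratio:
  assumes "a \<in> Units G" "h \<in> Units G"
  shows "(a \<otimes> h) [^] z = pow_ratio G a h z \<otimes> a [^] z"
proof -
  have "a [^] (- z) \<otimes> a [^] z = \<one>"
    using Units_int_pow_mult[OF assms(1), of "- z" z] by simp
  then show ?thesis
    using assms by (simp add: pow_ratio_def m_assoc Units_closed)
qed

lemma pow_ratio_0 [simp]: "pow_ratio G a h 0 = \<one>"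
  by (simp add: pow_ratio_def)

lemma pow_ratio_add:
  assumes "a \<in> Units G" "h \<in> Units G"
  shows "pow_ratio G a h (s + t) = pow_ratio G a h s \<otimes> (a [^] s \<otimes> pow_ratio G a h t \<otimes> a [^] (- s))"
proof -
  have neg: "a [^] (- (s + t)) = a [^] (- t) \<otimes> a [^] (- s)"
    using Units_int_pow_mult[OF assms(1), of "- t" "- s"] by (simp add: add.commute)
  have "pow_ratio G a h (s + t) = (a \<otimes> h) [^] s \<otimes> ((a \<otimes> h) [^] t \<otimes> a [^] (- t)) \<otimes> a [^] (- s)"
    unfolding pow_ratio_def neg Units_int_pow_mult[OF Units_m_closed[OF assms]]
    using assms by (simp add: m_assoc Units_closed)
  also have "\<dots> = pow_ratio G a h s \<otimes> (a [^] s \<otimes> pow_ratio G a h t \<otimes> a [^] (- s))"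
    unfolding int_pow_mult_eq_pow_ratio[OF assms, of s] pow_ratio_def[of G a h t, symmetric]
    using assms by (simp add: m_assoc Units_closed pow_ratio_Units)
  finally show ?thesis .
qed

lemma pow_ratio_add_1:
  assumes "a \<in> Units G" "h \<in> Units G"
  shows "pow_ratio G a h (z + 1) = pow_ratio G a h z \<otimes> (a [^] (z + 1) \<otimes> h \<otimes> a [^] (- (z + 1)))"
proof -
  have one: "pow_ratio G a h 1 = a [^] (1::int) \<otimes> h \<otimes> a [^] (- 1::int)"
    using assms by (simp add: pow_ratio_def)
  show ?thesis
    unfolding pow_ratio_add[OF assms] one Units_int_pow_conj_conj[OF assms(1) Units_closed[OF assms(2)]] by simp
qed

lemma pow_ratio_diff_1:
  assumes "a \<in> Units G" "h \<in> Units G"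
  shows "pow_ratio G a h (z - 1) = pow_ratio G a h z \<otimes> (a [^] z \<otimes> inv h \<otimes> a [^] (- z))"
proof -
  have "pow_ratio G a h (- 1) = inv h"
    using assms by (simp add: pow_ratio_def Units_int_pow_neg Units_inv_mult m_assoc Units_closed)
  then show ?thesis
    using pow_ratio_add[OF assms, of z "- 1"] by simp
qed

lemma oprod_closed: "(\<And>j. f j \<in> carrier G) \<Longrightarrow> oprod G f js \<in> carrier G"
  by (induction js) (auto simp: oprod_def)

lemma oprod_snoc:
  "(\<And>j. f j \<in> carrier G) \<Longrightarrow> oprod G f (js @ [j]) = oprod G f js \<otimes> f j"
  by (induction js) (simp_all add: oprod_def oprod_closed[unfolded oprod_def] m_assoc)

lemma pow_ratio_nat_eq_oprod:
  assumes "a \<in> Units G" "h \<in> Units G"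
  shows "pow_ratio G a h (int k) = oprod G (\<lambda>j. a [^] j \<otimes> h \<otimes> a [^] (- j)) [1..int k]"
proof (induction k)
  case 0
  then show ?case by (simp add: oprod_def)
next
  case (Suc k)
  have "[1..int (Suc k)] = [1..int k] @ [int k + 1]"
    using upto_rec2[of 1 "int k + 1"] by (simp add: add.commute)
  then show ?case
    using assms pow_ratio_add_1[OF assms, of "int k"]
    by (simp add: oprod_snoc Suc.IH Units_closed add.commute)
qed

lemma pow_ratio_neg_eq_oprod:
  assumes "a \<in> Units G" "h \<in> Units G"
  shows "pow_ratio G a h (- int k - 1) = oprod G (\<lambda>j. a [^] (- j) \<otimes> inv h \<otimes> a [^] j) [0..int k]"
proof (induction k)
  case 0
  then show ?case
    using assms pow_ratio_diff_1[OF assms, of 0] by (simp add: oprod_def Units_closed)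
next
  case (Suc k)
  have upto: "[0..int (Suc k)] = [0..int k] @ [int k + 1]"
    using upto_rec2[of 0 "int k + 1"] by (simp add: add.commute)
  have e: "- int (Suc k) - 1 = (- int k - 1) - 1" "- (- int k - 1) = int k + 1"
    "- int k - 1 = - (int k + 1)"
    by simp_all
  have "pow_ratio G a h (- int (Suc k) - 1)
      = pow_ratio G a h (- int k - 1) \<otimes> (a [^] (- (int k + 1)) \<otimes> inv h \<otimes> a [^] (int k + 1))"
    unfolding e(1) pow_ratio_diff_1[OF assms, of "- int k - 1"] e(2) unfolding e(3) ..
  then show ?case
    unfolding Suc.IH upto using assms by (simp add: oprod_snoc Units_closed)
qed

lemma pow_ratio_eq_oprod:
  assumes "a \<in> Units G" "h \<in> Units G"
  shows "pow_ratio G a h k =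
    (if k > 0 then oprod G (\<lambda>j. a [^] j \<otimes> h \<otimes> a [^] (- j)) [1..k]
     else if k < 0 then oprod G (\<lambda>j. a [^] (- j) \<otimes> inv h \<otimes> a [^] j) [0..-1-k]
     else \<one>)"
  using pow_ratio_nat_eq_oprod[OF assms, of "nat k"] pow_ratio_neg_eq_oprod[OF assms, of "nat (-1-k)"]
  by auto

end

definition centralizer :: "('a, 'b) monoid_scheme \<Rightarrow> 'a set \<Rightarrow> 'a set" where
  "centralizer G S = {x \<in> carrier G. \<forall>y \<in> S. x \<otimes>\<^bsub>G\<^esub> y = y \<otimes>\<^bsub>G\<^esub> x}"

context monoid begin

lemma one_in_centralizer: "S \<subseteq> carrier G \<Longrightarrow> \<one> \<in> centralizer G S"
  by (auto simp: centralizer_def)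

lemma centralizer_m_closed:
  assumes "S \<subseteq> carrier G" "x \<in> centralizer G S" "y \<in> centralizer G S"
  shows "x \<otimes> y \<in> centralizer G S"
proof -
  have x: "x \<in> carrier G" "\<And>z. z \<in> S \<Longrightarrow> x \<otimes> z = z \<otimes> x"
    and y: "y \<in> carrier G" "\<And>z. z \<in> S \<Longrightarrow> y \<otimes> z = z \<otimes> y"
    using assms(2,3) by (auto simp: centralizer_def)
  have "x \<otimes> y \<otimes> z = z \<otimes> (x \<otimes> y)" if "z \<in> S" for z
  proof -
    have z: "z \<in> carrier G" using that assms(1) by blast
    have "x \<otimes> y \<otimes> z = x \<otimes> (z \<otimes> y)"
      using x(1) y(1) z by (simp add: m_assoc y(2)[OF that])
    also have "\<dots> = (x \<otimes> z) \<otimes> y"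
      using x(1) y(1) z by (simp add: m_assoc)
    also have "\<dots> = z \<otimes> (x \<otimes> y)"
      using x(1) y(1) z by (simp add: m_assoc x(2)[OF that])
    finally show ?thesis .
  qed
  then show ?thesis
    using x(1) y(1) by (simp add: centralizer_def)
qed

lemma centralizer_Units_inv:
  assumes "x \<in> Units G" "x \<in> centralizer G S" "S \<subseteq> carrier G"
  shows "inv x \<in> centralizer G S"
proof -
  have "inv x \<otimes> y = y \<otimes> inv x" if "y \<in> S" for y
  proof -
    have y: "y \<in> carrier G" using that assms(3) by blast
    have "inv x \<otimes> y = inv x \<otimes> (y \<otimes> x) \<otimes> inv x"
      using assms(1) y by (simp add: m_assoc Units_closed)
    also have "\<dots> = inv x \<otimes> (x \<otimes> y) \<otimes> inv x"
      using assms(2) that by (simp add: centralizer_def)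
    also have "\<dots> = y \<otimes> inv x"
      using assms(1) y by (simp add: m_assoc[symmetric] Units_closed)
    finally show ?thesis .
  qed
  then show ?thesis
    using assms(1) by (simp add: centralizer_def Units_closed)
qed

lemma pow_ratio_in_centralizer:
  assumes "a \<in> Units G" "h \<in> Units G" "S \<subseteq> carrier G"
    and conj: "\<And>s::int. a [^] s \<otimes> h \<otimes> a [^] (- s) \<in> centralizer G S"
  shows "pow_ratio G a h z \<in> centralizer G S"
proof (induction z rule: int_induct[where k = 0])
  case base
  show ?case using assms(3) by (simp add: one_in_centralizer)
next
  case (step1 z)
  show ?case
    unfolding pow_ratio_add_1[OF assms(1,2)] using assms(3) step1(2) conj by (rule centralizer_m_closed)
next
  case (step2 z)
  have "a [^] z \<otimes> inv h \<otimes> a [^] (- z) \<in> centralizer G S"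
    using centralizer_Units_inv[OF _ conj assms(3)] assms(1,2)
    by (simp add: Units_int_pow_conj_inv)
  with step2 show ?case
    using assms(3) by (simp add: pow_ratio_diff_1[OF assms(1,2)] centralizer_m_closed)
qed

lemma pow_ratio_conj_in_centralizer:
  assumes "a \<in> Units G" "h \<in> Units G" "S \<subseteq> carrier G"
    and "\<And>s::int. a [^] s \<otimes> h \<otimes> a [^] (- s) \<in> centralizer G S"
  shows "a [^] (s::int) \<otimes> pow_ratio G a h t \<otimes> a [^] (- s) \<in> centralizer G S"
proof -
  have "a [^] s \<otimes> pow_ratio G a h t \<otimes> a [^] (- s) = inv (pow_ratio G a h s) \<otimes> pow_ratio G a h (s + t)"
    using assms(1,2) by (simp add: pow_ratio_add m_assoc[symmetric] pow_ratio_Units Units_closed)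
  then show ?thesis
    using assms pow_ratio_Units[OF assms(1,2)]
    by (simp add: centralizer_m_closed centralizer_Units_inv pow_ratio_in_centralizer)
qed

text \<open>Negative powers of a non-unit are junk in a monoid, hence the unit hypothesis.\<close>

lemma word_closed:
  "t \<in> Units G \<Longrightarrow> (\<And>i. i \<le> l \<Longrightarrow> b i \<in> carrier G) \<Longrightarrow> word G b n l t \<in> carrier G"
  by (induction l) (simp_all add: Units_closed)

lemma word_mult_commute_conj:
  assumes a: "a \<in> Units G" and S: "S \<subseteq> carrier G" "\<And>i. i \<le> l \<Longrightarrow> b i \<in> S"
    and y: "y \<in> carrier G" "\<And>s::int. a [^] s \<otimes> y \<otimes> a [^] (- s) \<in> centralizer G S"
  shows "word G b n l a \<otimes> y
    = (a [^] (\<Sum>i = 1..l. n i) \<otimes> y \<otimes> a [^] (- (\<Sum>i = 1..l. n i))) \<otimes> word G b n l a"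
  using S(2) y
proof (induction l arbitrary: y)
  case 0
  have "y \<in> centralizer G S" using "0.prems"(3)[of 0] "0.prems"(2) by simp
  then show ?case using "0.prems"(1,2) by (simp add: centralizer_def)
next
  case (Suc l)
  define N where "N = n (Suc l)"
  define K where "K = (\<Sum>i = 1..l. n i)"
  define W where "W = word G b n l a"
  define y' where "y' = a [^] N \<otimes> y \<otimes> a [^] (- N)"
  have bS: "b (Suc l) \<in> S" and bC: "b (Suc l) \<in> carrier G" using Suc.prems(1) S(1) by auto
  have W: "W \<in> carrier G" unfolding W_def using Suc.prems(1) S(1) by (intro word_closed[OF a]) auto
  have y'C: "y' \<in> carrier G" unfolding y'_def using a Suc.prems(2) by (simp add: Units_closed)
  have "y \<in> centralizer G S" using Suc.prems(2) Suc.prems(3)[of 0] by simp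
  then have yb: "y \<otimes> b (Suc l) = b (Suc l) \<otimes> y" using bS by (simp add: centralizer_def)
  have conj_y': "a [^] s \<otimes> y' \<otimes> a [^] (- s) = a [^] (s + N) \<otimes> y \<otimes> a [^] (- (s + N))" for s :: int
    unfolding y'_def using a Suc.prems(2) by (rule Units_int_pow_conj_conj)
  have "a [^] s \<otimes> y' \<otimes> a [^] (- s) \<in> centralizer G S" for s :: int
    unfolding conj_y' by (rule Suc.prems(3))
  then have IH: "W \<otimes> y' = (a [^] K \<otimes> y' \<otimes> a [^] (- K)) \<otimes> W"
    unfolding W_def K_def using Suc.prems(1) y'C by (intro Suc.IH) simp_all
  have "W \<otimes> a [^] N \<otimes> b (Suc l) \<otimes> y = W \<otimes> (a [^] N \<otimes> y) \<otimes> b (Suc l)"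
    using W bC a Suc.prems(2) by (simp add: m_assoc yb Units_closed)
  also have "\<dots> = (W \<otimes> y') \<otimes> a [^] N \<otimes> b (Suc l)"
    using W bC a y'C Units_int_pow_mult_conj[OF a Suc.prems(2), of N]
    by (simp add: m_assoc Units_closed flip: y'_def)
  also have "\<dots> = (a [^] (K + N) \<otimes> y \<otimes> a [^] (- (K + N))) \<otimes> (W \<otimes> a [^] N \<otimes> b (Suc l))"
    unfolding IH conj_y'[symmetric] using W bC a y'C by (simp add: m_assoc Units_closed)
  finally show ?case by (simp add: N_def K_def W_def)
qed

lemma word_mult_eq_pow_ratio_mult:
  assumes a: "a \<in> Units G" and h: "h \<in> Units G"
    and S: "S \<subseteq> carrier G" "\<And>i. i \<le> l \<Longrightarrow> b i \<in> S"
    and conj: "\<And>s::int. a [^] s \<otimes> h \<otimes> a [^] (- s) \<in> centralizer G S"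
  shows "word G b n l (a \<otimes> h) = pow_ratio G a h (\<Sum>i = 1..l. n i) \<otimes> word G b n l a"
  using S(2)
proof (induction l)
  case 0
  then show ?case using S(1) by auto
next
  case (Suc l)
  define N where "N = n (Suc l)"
  define K where "K = (\<Sum>i = 1..l. n i)"
  define W where "W = word G b n l a"
  let ?Q = "pow_ratio G a h"
  have bC: "b (Suc l) \<in> carrier G" using Suc.prems S(1) by auto
  have W: "W \<in> carrier G" unfolding W_def using Suc.prems S(1) by (intro word_closed[OF a]) auto
  have Q: "?Q z \<in> carrier G" for z using pow_ratio_Units[OF a h] by (simp add: Units_closed)
  have commute: "W \<otimes> ?Q N = (a [^] K \<otimes> ?Q N \<otimes> a [^] (- K)) \<otimes> W"
    unfolding W_def K_def
    using a S(1) Suc.prems Q pow_ratio_conj_in_centralizer[OF a h S(1) conj]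
    by (intro word_mult_commute_conj) auto
  have "word G b n (Suc l) (a \<otimes> h) = ?Q K \<otimes> W \<otimes> (?Q N \<otimes> a [^] N) \<otimes> b (Suc l)"
    using Suc unfolding W_def K_def N_def by (simp add: int_pow_mult_eq_pow_ratio[OF a h])
  also have "\<dots> = ?Q K \<otimes> (W \<otimes> ?Q N) \<otimes> a [^] N \<otimes> b (Suc l)"
    using W bC Q a by (simp add: m_assoc Units_closed)
  also have "\<dots> = (?Q K \<otimes> (a [^] K \<otimes> ?Q N \<otimes> a [^] (- K))) \<otimes> (W \<otimes> a [^] N \<otimes> b (Suc l))"
    unfolding commute using W bC Q a by (simp add: m_assoc Units_closed)
  also have "\<dots> = ?Q (K + N) \<otimes> word G b n (Suc l) a"
    unfolding pow_ratio_add[OF a h] W_def N_def by simp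
  finally show ?case by (simp add: K_def N_def)
qed

end

theorem lemma1:
  fixes G (structure)
    and b :: "nat \<Rightarrow> 'a" and n :: "nat \<Rightarrow> int" and l :: nat and a h :: 'a
  assumes "monoid G"
    and "\<And>i. i \<le> l \<Longrightarrow> b i \<in> carrier G"
    and "a \<in> Units G" and "h \<in> Units G"
    and "\<And>(s::int) i. i \<le> l \<Longrightarrow>
           (a [^] (- s) \<otimes> h \<otimes> a [^] s) \<otimes> b i = b i \<otimes> (a [^] (- s) \<otimes> h \<otimes> a [^] s)"
  defines "k \<equiv> (\<Sum>i = 1..l. n i)"
  shows "word G b n l (a \<otimes> h) =
    (if k > 0 then oprod G (\<lambda>j. a [^] j \<otimes> h \<otimes> a [^] (- j)) [1..k] \<otimes> word G b n l a
     else if k < 0 then oprod G (\<lambda>j. a [^] (- j) \<otimes> inv h \<otimes> a [^] j) [0..-1-k] \<otimes> word G b n l a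
     else word G b n l a)"
proof -
  interpret monoid G by fact
  have conj: "a [^] s \<otimes> h \<otimes> a [^] (- s) \<in> centralizer G (b ` {..l})" for s :: int
    using assms(3,4) assms(5)[of _ "- s"] by (auto simp: centralizer_def Units_closed)
  have "word G b n l (a \<otimes> h) = pow_ratio G a h k \<otimes> word G b n l a"
    unfolding k_def using assms(2-4) conj by (intro word_mult_eq_pow_ratio_mult[where S = "b ` {..l}"]) auto
  then show ?thesis
    using pow_ratio_eq_oprod[OF assms(3,4), of k] word_closed[OF assms(3,2)] by simp
qed

end
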